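(* Let $(X_n)_{n\in\mathbb N}$ be independent, uniformly bounded real random variables with $\mathbb E(X_n)\sim n^{-a}$ for some $a\in(0,1/6)$, and let $b>0$. Then almost surely there is a constant $C_\omega$ such that for all $N\in\mathbb N$, $$\Bigl|\sum_{m=1}^{[N^b]}\sum_{n=1}^N X_{n+m}X_n\Bigr|\le C_\omega N^{b+1-2a}.$$
   Context: $u_n\sim v_n$ means $u_n/v_n$ converges to a nonzero constant; $[t]$ denotes the integer part. *)

theory Defs
  imports "HOL-Probability.Probability"
begin

end

theory Submission
  imports Defs
begin

text \<open>
  After truncating \<open>X\<close> at its bound, \<open>E S\<^sub>N = O(N^(b+1-2a))\<close> by independence, and since only
  products sharing a factor are correlated, \<open>Var S\<^sub>N = O(N^(2b+1))\<close>.  Chebyshev gives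
  \<open>P(\<bar>S\<^sub>N - E S\<^sub>N\<bar> \<ge> N^(b+1-2a)) = O(N^(4a-1))\<close>, which is summable along the cubes
  \<open>N = k\<^sup>3\<close> (as \<open>a < 1/6\<close>), so Borel--Cantelli yields the bound along the cubes.  Between consecutive
  cubes \<open>S\<^sub>N\<close> changes by at most the number of new index pairs; this is small enough when
  \<open>2a \<le> b\<close>.  For \<open>b < 2a\<close> the rounding in \<open>[N^b]\<close> matters, and one adds the times at which the
  maximal lag increases, a subsequence that is again sparse enough.
\<close>

section \<open>Real estimates\<close>

lemma powr_mvt:
  fixes x y s :: real
  assumes "0 < x" "x < y"
  shows "\<exists>z. x < z \<and> z < y \<and> y powr s - x powr s = (y - x) * (s * z powr (s - 1))"
proof -
  have "\<And>t. x \<le> t \<Longrightarrow> t \<le> y \<Longrightarrow> ((\<lambda>z. z powr s) has_real_derivative s * t powr (s - 1)) (at t)"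
    using assms by (intro has_real_derivative_powr) auto
  from MVT2[OF assms(2), of "\<lambda>z. z powr s" "\<lambda>z. s * z powr (s - 1)", OF this]
  show ?thesis by auto
qed

lemma powr_diff_le:
  fixes x y s :: real
  assumes "0 < x" "x \<le> y" "1 \<le> s"
  shows "y powr s - x powr s \<le> s * y powr (s - 1) * (y - x)"
proof (cases "x = y")
  case False
  with assms obtain z where z: "x < z" "z < y" "y powr s - x powr s = (y - x) * (s * z powr (s - 1))"
    using powr_mvt[OF assms(1), of y s] by auto
  have "s * z powr (s - 1) \<le> s * y powr (s - 1)"
    using z assms by (intro mult_left_mono powr_mono2) auto
  then show ?thesis using z assms by (simp add: mult.commute mult_left_mono)
qed simp

lemma sum_powr_le:
  fixes s :: real
  assumes "0 < s" "s < 1"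
  shows "(\<Sum>n=1..N. real n powr (-s)) \<le> real N powr (1 - s) / (1 - s)"
proof (induction N)
  case (Suc N)
  show ?case
  proof (cases "N = 0")
    case True
    then show ?thesis using assms by (simp add: field_simps)
  next
    case False
    then have pos: "0 < real N" by auto
    obtain z where z: "real N < z" "z < real N + 1"
      "(real N + 1) powr (1 - s) - real N powr (1 - s) = (1 - s) * z powr (-s)"
      using powr_mvt[OF pos, of "real N + 1" "1 - s"] by auto
    have "(real N + 1) powr (-s) \<le> z powr (-s)"
      using z pos assms by (intro powr_mono2') auto
    then have "(1 - s) * real (Suc N) powr (-s) \<le> real (Suc N) powr (1 - s) - real N powr (1 - s)"
      using z assms by (simp add: add.commute)
    then have "real (Suc N) powr (-s) \<le> ((real N + 1) powr (1 - s) - real N powr (1 - s)) / (1 - s)"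
      using assms by (simp add: pos_le_divide_eq mult.commute add.commute)
    then have "real (Suc N) powr (-s) \<le> real (Suc N) powr (1 - s) / (1 - s) - real N powr (1 - s) / (1 - s)"
      by (simp add: diff_divide_distrib add.commute)
    then show ?thesis using Suc.IH by simp
  qed
qed simp

lemma cube_bracket:
  fixes N :: nat
  shows "\<exists>k. k^3 \<le> N \<and> N < (k+1)^3"
proof (induction N)
  case (Suc N)
  then obtain k where k: "k^3 \<le> N" "N < (k+1)^3" by auto
  show ?case
  proof (cases "Suc N < (k+1)^3")
    case False
    then have "Suc N = (k+1)^3" using k by auto
    moreover have "(k+1)^3 < (k+2)^3" by (intro power_strict_mono) auto
    ultimately show ?thesis by (intro exI[of _ "k+1"]) auto
  qed (use k le_SucI in blast)
qed auto

lemma cube_gap: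
  fixes N :: nat
  assumes N: "1 \<le> N"
  shows "\<exists>k. 1 \<le> k \<and> k^3 \<le> N \<and> real N - real (k^3) \<le> 6 * real N powr (2/3)"
proof -
  obtain k where k: "k^3 \<le> N" "N < (k+1)^3" using cube_bracket by blast
  have k1: "1 \<le> k" using k N by (cases k) auto
  have "N + 1 \<le> k^3 + 3*k^2 + 3*k + 1"
    using k(2) by (simp add: power3_eq_cube power2_eq_square algebra_simps)
  moreover have "k \<le> k^2" using k1 by (simp add: power2_eq_square)
  ultimately have gap: "real N - real (k^3) \<le> 6 * (real k)^2" by (simp flip: of_nat_power)
  have root: "real k \<le> real N powr (1/3)"
  proof -
    have "real k powr 3 \<le> real N" using k(1) k1 by (simp add: powr_realpow flip: of_nat_power)
    then have "(real k powr 3) powr (1/3) \<le> real N powr (1/3)" by (intro powr_mono2) auto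
    moreover have "(real k powr 3) powr (1/3) = real k" by (subst powr_powr) simp
    ultimately show ?thesis by simp
  qed
  have "(real k)^2 \<le> (real N powr (1/3))^2" using root by (intro power_mono) auto
  also have "\<dots> = real N powr (2/3)" by (simp add: powr_powr flip: powr_realpow')
  finally show ?thesis using gap k1 k(1) by (intro exI[of _ k]) auto
qed

lemma eventually_bound_imp_bound:
  fixes g :: "nat \<Rightarrow> real" and h :: "nat \<Rightarrow> nat"
  assumes ev: "eventually (\<lambda>k. \<bar>g (h k)\<bar> \<le> D * real (h k) powr e) sequentially"
    and g0: "g 0 = 0"
  shows "\<exists>C. \<forall>k. \<bar>g (h k)\<bar> \<le> C * real (h k) powr e"
proof -
  obtain k0 where k0: "\<And>k. k \<ge> k0 \<Longrightarrow> \<bar>g (h k)\<bar> \<le> D * real (h k) powr e"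
    using ev unfolding eventually_sequentially by auto
  define R where "R = (\<Sum>k<k0. \<bar>g (h k)\<bar> / real (h k) powr e)"
  have R0: "0 \<le> R" unfolding R_def by (intro sum_nonneg) auto
  have "\<bar>g (h k)\<bar> \<le> (\<bar>D\<bar> + R) * real (h k) powr e" for k
  proof (cases "k \<ge> k0")
    case True
    then have "\<bar>g (h k)\<bar> \<le> D * real (h k) powr e" using k0 by auto
    also have "\<dots> \<le> (\<bar>D\<bar> + R) * real (h k) powr e" using R0 by (intro mult_right_mono) auto
    finally show ?thesis .
  next
    case False
    show ?thesis
    proof (cases "h k = 0")
      case hk: False
      have "\<bar>g (h k)\<bar> / real (h k) powr e \<le> R"
        unfolding R_def using False by (intro member_le_sum) auto
      then have "\<bar>g (h k)\<bar> \<le> R * real (h k) powr e" using hk by (simp add: pos_divide_le_eq)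
      also have "\<dots> \<le> (\<bar>D\<bar> + R) * real (h k) powr e" by (intro mult_right_mono) auto
      finally show ?thesis .
    qed (use g0 in simp)
  qed
  then show ?thesis by blast
qed

lemma bounded_by_powr_of_limit:
  fixes f :: "nat \<Rightarrow> real"
  assumes "(\<lambda>n. f n / real n powr (-a)) \<longlonglongrightarrow> c"
  obtains D where "\<And>n. 1 \<le> n \<Longrightarrow> \<bar>f n\<bar> \<le> D * real n powr (-a)"
proof -
  obtain D where D: "\<And>n. norm (f n / real n powr (-a)) \<le> D"
    using convergent_imp_Bseq[OF convergentI[OF assms]] by (auto elim!: BseqE) blast
  have "\<bar>f n\<bar> \<le> D * real n powr (-a)" if "1 \<le> n" for n
    using D[of n] that by (simp add: abs_div pos_divide_le_eq)
  then show ?thesis by (rule that)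
qed

lemma abs_prod_le_power:
  fixes y :: "'i \<Rightarrow> real"
  assumes "\<And>k. \<bar>y k\<bar> \<le> K"
  shows "\<bar>\<Prod>k\<in>J. y k\<bar> \<le> K ^ card J"
proof -
  have "\<bar>\<Prod>k\<in>J. y k\<bar> = (\<Prod>k\<in>J. \<bar>y k\<bar>)" by (rule abs_prod)
  also have "\<dots> \<le> (\<Prod>k\<in>J. K)" by (intro prod_mono) (use assms in auto)
  finally show ?thesis by simp
qed

section \<open>Second moments of sums of products of independent variables\<close>

context prob_space
begin

lemma abs_expectation_le:
  fixes f :: "'a \<Rightarrow> real"
  assumes [measurable]: "f \<in> borel_measurable M" and bnd: "\<And>\<omega>. \<bar>f \<omega>\<bar> \<le> B"
  shows "\<bar>expectation f\<bar> \<le> B"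
proof -
  have "\<bar>expectation f\<bar> \<le> expectation (\<lambda>\<omega>. \<bar>f \<omega>\<bar>)" by (rule integral_abs_bound)
  also have "\<dots> \<le> B"
    by (rule integral_le_const) (use bnd in \<open>auto intro!: integrable_const_bound[where B=B]\<close>)
  finally show ?thesis .
qed

lemma expectation_prod_indep:
  fixes Y :: "'i \<Rightarrow> 'a \<Rightarrow> real"
  assumes ind: "indep_vars (\<lambda>_. borel) Y UNIV" and fin: "finite J" and int: "\<And>k. integrable M (Y k)"
  shows "expectation (\<lambda>\<omega>. \<Prod>k\<in>J. Y k \<omega>) = (\<Prod>k\<in>J. expectation (Y k))"
  by (rule indep_vars_lebesgue_integral) (use indep_vars_subset[OF ind] fin int in auto)

definition covar :: "('a \<Rightarrow> real) \<Rightarrow> ('a \<Rightarrow> real) \<Rightarrow> real" where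
  "covar f g = expectation (\<lambda>\<omega>. (f \<omega> - expectation f) * (g \<omega> - expectation g))"

lemma centred_product_le:
  fixes f g :: "'a \<Rightarrow> real"
  assumes "f \<in> borel_measurable M" "g \<in> borel_measurable M"
    and "\<And>\<omega>. \<bar>f \<omega>\<bar> \<le> B" "\<And>\<omega>. \<bar>g \<omega>\<bar> \<le> B"
  shows "\<bar>(f \<omega> - expectation f) * (g \<omega> - expectation g)\<bar> \<le> 4 * B^2"
proof -
  have "\<bar>f \<omega> - expectation f\<bar> \<le> 2 * B" "\<bar>g \<omega> - expectation g\<bar> \<le> 2 * B"
    using assms(3,4)[of \<omega>] abs_expectation_le[OF assms(1,3)] abs_expectation_le[OF assms(2,4)]
      abs_triangle_ineq4[of "f \<omega>" "expectation f"] abs_triangle_ineq4[of "g \<omega>" "expectation g"]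
    by linarith+
  then have "\<bar>(f \<omega> - expectation f) * (g \<omega> - expectation g)\<bar> \<le> (2 * B) * (2 * B)"
    unfolding abs_mult by (intro mult_mono) auto
  then show ?thesis by (simp add: power2_eq_square)
qed

lemma abs_covar_le:
  fixes f g :: "'a \<Rightarrow> real"
  assumes [measurable]: "f \<in> borel_measurable M" "g \<in> borel_measurable M"
    and "\<And>\<omega>. \<bar>f \<omega>\<bar> \<le> B" "\<And>\<omega>. \<bar>g \<omega>\<bar> \<le> B"
  shows "\<bar>covar f g\<bar> \<le> 4 * B^2"
  unfolding covar_def using centred_product_le[OF assms] by (intro abs_expectation_le) auto

lemma covar_eq:
  fixes f g :: "'a \<Rightarrow> real"
  assumes "integrable M f" "integrable M g" "integrable M (\<lambda>\<omega>. f \<omega> * g \<omega>)"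
  shows "covar f g = expectation (\<lambda>\<omega>. f \<omega> * g \<omega>) - expectation f * expectation g"
proof -
  have "covar f g = expectation (\<lambda>\<omega>. f \<omega> * g \<omega> - expectation g * f \<omega> - expectation f * g \<omega>
      + expectation f * expectation g)"
    unfolding covar_def by (rule Bochner_Integration.integral_cong) (auto simp: algebra_simps)
  also have "\<dots> = expectation (\<lambda>\<omega>. f \<omega> * g \<omega>) - expectation f * expectation g"
    using assms by (simp add: prob_space)
  finally show ?thesis .
qed

lemma variance_sum_covar:
  fixes Z :: "'p \<Rightarrow> 'a \<Rightarrow> real"
  assumes fin: "finite I" and [measurable]: "\<And>p. Z p \<in> borel_measurable M"
    and bnd: "\<And>p \<omega>. \<bar>Z p \<omega>\<bar> \<le> B"
  shows "variance (\<lambda>\<omega>. \<Sum>p\<in>I. Z p \<omega>) = (\<Sum>p\<in>I. \<Sum>q\<in>I. covar (Z p) (Z q))"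
proof -
  have intZ: "integrable M (Z p)" for p
    by (rule integrable_const_bound[where B=B]) (use bnd in auto)
  have intC: "integrable M (\<lambda>\<omega>. (Z p \<omega> - expectation (Z p)) * (Z q \<omega> - expectation (Z q)))" for p q
    by (rule integrable_const_bound[where B="4 * B^2"]) (use centred_product_le bnd in auto)
  have "expectation (\<lambda>\<omega>. \<Sum>p\<in>I. Z p \<omega>) = (\<Sum>p\<in>I. expectation (Z p))"
    by (rule Bochner_Integration.integral_sum) (use intZ in auto)
  then have "variance (\<lambda>\<omega>. \<Sum>p\<in>I. Z p \<omega>)
      = expectation (\<lambda>\<omega>. \<Sum>p\<in>I. \<Sum>q\<in>I. (Z p \<omega> - expectation (Z p)) * (Z q \<omega> - expectation (Z q)))"
    by (simp add: power2_eq_square sum_product flip: sum_subtractf)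
  also have "\<dots> = (\<Sum>p\<in>I. \<Sum>q\<in>I. covar (Z p) (Z q))"
    unfolding covar_def
    by (subst Bochner_Integration.integral_sum, use intC in \<open>auto intro!: Bochner_Integration.integrable_sum\<close>)
  finally show ?thesis .
qed

lemma covar_indep_prod:
  fixes Y :: "'i \<Rightarrow> 'a \<Rightarrow> real"
  assumes ind: "indep_vars (\<lambda>_. borel) Y UNIV" and bnd: "\<And>k \<omega>. \<bar>Y k \<omega>\<bar> \<le> K"
    and fin: "finite J" "finite J'" and dj: "J \<inter> J' = {}"
  shows "covar (\<lambda>\<omega>. \<Prod>k\<in>J. Y k \<omega>) (\<lambda>\<omega>. \<Prod>k\<in>J'. Y k \<omega>) = 0"
proof -
  have [measurable]: "Y k \<in> borel_measurable M" for k
    using ind unfolding indep_vars_def by auto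
  have intY: "integrable M (Y k)" for k
    by (rule integrable_const_bound[where B=K]) (use bnd in auto)
  have intP: "integrable M (\<lambda>\<omega>. \<Prod>k\<in>L. Y k \<omega>)" for L
    by (rule integrable_const_bound[where B="K ^ card L"]) (use bnd in \<open>auto intro!: abs_prod_le_power\<close>)
  have split: "(\<Prod>k\<in>J \<union> J'. f k) = (\<Prod>k\<in>J. f k) * (\<Prod>k\<in>J'. f k)" for f :: "'i \<Rightarrow> real"
    by (rule prod.union_disjoint) (use fin dj in auto)
  have "expectation (\<lambda>\<omega>. (\<Prod>k\<in>J. Y k \<omega>) * (\<Prod>k\<in>J'. Y k \<omega>)) = (\<Prod>k\<in>J \<union> J'. expectation (Y k))"
    unfolding split[symmetric] by (rule expectation_prod_indep[OF ind _ intY]) (use fin in auto)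
  also have "\<dots> = expectation (\<lambda>\<omega>. \<Prod>k\<in>J. Y k \<omega>) * expectation (\<lambda>\<omega>. \<Prod>k\<in>J'. Y k \<omega>)"
    unfolding split expectation_prod_indep[OF ind fin(1) intY] expectation_prod_indep[OF ind fin(2) intY] ..
  finally show ?thesis
    using intP[of J] intP[of J'] intP[of "J \<union> J'"] by (subst covar_eq) (auto simp: split)
qed

text \<open>Variance of a sum of products of independent bounded variables: only pairs of products
  sharing a factor contribute, each by at most \<open>4B\<^sup>2\<close>.\<close>
lemma variance_sum_indep_prod_le:
  fixes Y :: "'i \<Rightarrow> 'a \<Rightarrow> real" and J :: "'p \<Rightarrow> 'i set"
  assumes ind: "indep_vars (\<lambda>_. borel) Y UNIV" and bY: "\<And>k \<omega>. \<bar>Y k \<omega>\<bar> \<le> K"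
    and finJ: "\<And>p. finite (J p)" and bZ: "\<And>p \<omega>. \<bar>\<Prod>k\<in>J p. Y k \<omega>\<bar> \<le> B" and finI: "finite I"
  shows "variance (\<lambda>\<omega>. \<Sum>p\<in>I. \<Prod>k\<in>J p. Y k \<omega>)
    \<le> 4 * B^2 * (\<Sum>p\<in>I. real (card {q\<in>I. J p \<inter> J q \<noteq> {}}))"
proof -
  have [measurable]: "Y k \<in> borel_measurable M" for k
    using ind unfolding indep_vars_def by auto
  let ?Z = "\<lambda>p \<omega>. \<Prod>k\<in>J p. Y k \<omega>"
  have "variance (\<lambda>\<omega>. \<Sum>p\<in>I. ?Z p \<omega>) = (\<Sum>p\<in>I. \<Sum>q\<in>I. covar (?Z p) (?Z q))"
    by (rule variance_sum_covar[OF finI _ bZ]) measurable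
  also have "\<dots> \<le> (\<Sum>p\<in>I. \<Sum>q\<in>I. if J p \<inter> J q \<noteq> {} then 4 * B^2 else 0)"
    using abs_covar_le[of "?Z p" "?Z q" B for p q] covar_indep_prod[OF ind bY finJ finJ] bZ
    by (intro sum_mono) (auto simp: abs_le_iff)
  also have "\<dots> = 4 * B^2 * (\<Sum>p\<in>I. real (card {q\<in>I. J p \<inter> J q \<noteq> {}}))"
    by (simp add: sum.inter_filter[symmetric] finI sum_distrib_left mult.commute)
  finally show ?thesis .
qed

lemma borel_cantelli_powr:
  assumes A: "\<And>k. A k \<in> events"
    and ev: "eventually (\<lambda>k. prob (A k) \<le> c * real k powr t) sequentially" and t: "t < -1"
  shows "AE \<omega> in M. eventually (\<lambda>k. \<omega> \<notin> A k) sequentially"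
proof -
  have "summable (\<lambda>k. c * real k powr t)"
    by (intro summable_mult) (use t summable_real_powr_iff in auto)
  then have "summable (\<lambda>k. measure M (A k))"
    by (rule summable_comparison_test_ev[rotated]) (use ev in \<open>auto elim!: eventually_mono\<close>)
  then have "AE \<omega> in M. eventually (\<lambda>k. \<omega> \<in> space M - A k) sequentially"
    by (intro borel_cantelli_AE1[OF A]) (simp add: less_top[symmetric])
  then show ?thesis by (auto elim!: eventually_mono)
qed

end

section \<open>The index region of the lagged sums\<close>

text \<open>The lagged sum \<open>\<Sum>m\<le>N^b. \<Sum>n\<le>N. x\<^sub>n\<^sub>+\<^sub>m x\<^sub>n\<close> runs over the region
  \<open>{1..max_lag b N} \<times> {1..N}\<close>; the pair \<open>(m, n)\<close> contributes the product over \<open>lag_pair (m, n)\<close>.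
  \<open>lag_start b j\<close> is a time from which on the maximal lag is at least \<open>j\<close>.\<close>
definition max_lag :: "real \<Rightarrow> nat \<Rightarrow> nat" where
  "max_lag b N = nat \<lfloor>real N powr b\<rfloor>"

definition lag_start :: "real \<Rightarrow> nat \<Rightarrow> nat" where
  "lag_start b j = nat \<lceil>real j powr (1/b)\<rceil>"

definition lag_region :: "real \<Rightarrow> nat \<Rightarrow> (nat \<times> nat) set" where
  "lag_region b N = {1..max_lag b N} \<times> {1..N}"

definition lag_pair :: "nat \<times> nat \<Rightarrow> nat set" where
  "lag_pair p = {snd p, snd p + fst p}"

lemma max_lag_le: "real (max_lag b N) \<le> real N powr b"
  by (auto simp: max_lag_def of_nat_nat)

lemma max_lag_ge: "real N powr b - 1 \<le> real (max_lag b N)"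
  unfolding max_lag_def by linarith

lemma max_lag_mono: "0 < b \<Longrightarrow> p \<le> N \<Longrightarrow> max_lag b p \<le> max_lag b N"
  unfolding max_lag_def by (intro nat_mono floor_mono powr_mono2) auto

lemma le_max_lag_start: "0 < b \<Longrightarrow> j \<le> max_lag b (lag_start b j)"
proof -
  assume b: "0 < b"
  have "real j powr (1/b) \<le> real (lag_start b j)" unfolding lag_start_def by linarith
  then have "(real j powr (1/b)) powr b \<le> real (lag_start b j) powr b"
    using b by (intro powr_mono2) auto
  then have "real j \<le> real (lag_start b j) powr b" using b by (simp add: powr_powr)
  then show ?thesis unfolding max_lag_def by (simp add: le_nat_floor)
qed

lemma lag_start_max_lag_le: "0 < b \<Longrightarrow> lag_start b (max_lag b N) \<le> N"
proof -
  assume b: "0 < b"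
  have "real (max_lag b N) powr (1/b) \<le> (real N powr b) powr (1/b)"
    using b max_lag_le by (intro powr_mono2) auto
  also have "\<dots> = real N" using b by (simp add: powr_powr)
  finally show ?thesis unfolding lag_start_def by (simp add: ceiling_le_iff nat_le_iff)
qed

lemma lag_start_ge: "real j powr (1/b) \<le> real (lag_start b j)"
  unfolding lag_start_def by linarith

lemma card_lag_region: "card (lag_region b N) = max_lag b N * N"
  unfolding lag_region_def by (simp add: card_cartesian_product)

lemma prod_lag_pair: "1 \<le> m \<Longrightarrow> (\<Prod>k\<in>lag_pair (m, n). f k) = f (n + m) * f n"
  unfolding lag_pair_def by (auto simp: mult.commute)

lemma sum_lag_region_increment:
  fixes F :: "nat \<times> nat \<Rightarrow> real"
  assumes "0 < b" "p \<le> N" "\<And>q. \<bar>F q\<bar> \<le> W"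
  shows "\<bar>(\<Sum>q\<in>lag_region b N. F q) - (\<Sum>q\<in>lag_region b p. F q)\<bar>
    \<le> W * (real (max_lag b N * N) - real (max_lag b p * p))"
proof -
  have sub: "lag_region b p \<subseteq> lag_region b N"
    using max_lag_mono[OF assms(1,2)] assms(2) unfolding lag_region_def by auto
  have fin: "finite (lag_region b N)" unfolding lag_region_def by auto
  have "\<bar>(\<Sum>q\<in>lag_region b N. F q) - (\<Sum>q\<in>lag_region b p. F q)\<bar> = \<bar>\<Sum>q\<in>lag_region b N - lag_region b p. F q\<bar>"
    using sum_diff[OF fin sub, of F] by simp
  also have "\<dots> \<le> (\<Sum>q\<in>lag_region b N - lag_region b p. W)"
    by (rule order_trans[OF sum_abs]) (intro sum_mono assms(3))
  also have "\<dots> = W * real (card (lag_region b N - lag_region b p))" by simp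
  also have "card (lag_region b N - lag_region b p) = max_lag b N * N - max_lag b p * p"
    using card_Diff_subset[OF finite_subset[OF sub fin] sub] by (simp add: card_lag_region)
  also have "real (max_lag b N * N - max_lag b p * p) = real (max_lag b N * N) - real (max_lag b p * p)"
    using card_mono[OF fin sub] by (simp add: card_lag_region of_nat_diff)
  finally show ?thesis .
qed

text \<open>A pair in the region shares an index with at most \<open>4 max_lag\<close> pairs of the region:
  for each lag \<open>k\<close> the start \<open>l\<close> must be one of \<open>n, n+m, n-k, n+m-k\<close>.\<close>
lemma card_overlapping_pairs:
  "card {q\<in>lag_region b N. lag_pair p \<inter> lag_pair q \<noteq> {}} \<le> 4 * max_lag b N"
proof -
  obtain m n where p: "p = (m, n)" by force
  let ?M = "max_lag b N"
  let ?cands = "\<lambda>k. (\<lambda>l. (k, l)) ` {n, n+m, n-k, n+m-k}"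
  have "{q\<in>lag_region b N. lag_pair p \<inter> lag_pair q \<noteq> {}} \<subseteq> (\<Union>k\<in>{1..?M}. ?cands k)"
  proof
    fix q assume q: "q \<in> {q\<in>lag_region b N. lag_pair p \<inter> lag_pair q \<noteq> {}}"
    obtain k l where ql: "q = (k, l)" by force
    have "k \<in> {1..?M}" using q ql unfolding lag_region_def by auto
    moreover have "{n, n+m} \<inter> {l, l+k} \<noteq> {}" using q ql p by (simp add: lag_pair_def)
    then have "l \<in> {n, n+m, n-k, n+m-k}" by auto
    ultimately show "q \<in> (\<Union>k\<in>{1..?M}. ?cands k)" using ql by auto
  qed
  then have "card {q\<in>lag_region b N. lag_pair p \<inter> lag_pair q \<noteq> {}} \<le> card (\<Union>k\<in>{1..?M}. ?cands k)"
    by (intro card_mono) auto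
  also have "\<dots> \<le> (\<Sum>k\<in>{1..?M}. card (?cands k))"
    by (rule card_UN_le) auto
  also have "\<dots> \<le> (\<Sum>k\<in>{1..?M}. 4)"
  proof (intro sum_mono)
    fix k
    have "card (?cands k) \<le> card {n, n+m, n-k, n+m-k}" by (rule card_image_le) auto
    also have "\<dots> \<le> 4" using card_length[of "[n, n+m, n-k, n+m-k]"] by simp
    finally show "card (?cands k) \<le> 4" .
  qed
  finally show ?thesis by simp
qed

lemma sum_card_overlapping_pairs:
  "(\<Sum>p\<in>lag_region b N. real (card {q\<in>lag_region b N. lag_pair p \<inter> lag_pair q \<noteq> {}}))
    \<le> 4 * real (max_lag b N)^2 * real N"
proof -
  have "(\<Sum>p\<in>lag_region b N. real (card {q\<in>lag_region b N. lag_pair p \<inter> lag_pair q \<noteq> {}}))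
      \<le> (\<Sum>p\<in>lag_region b N. 4 * real (max_lag b N))"
  proof (intro sum_mono)
    fix p
    show "real (card {q\<in>lag_region b N. lag_pair p \<inter> lag_pair q \<noteq> {}}) \<le> 4 * real (max_lag b N)"
      using of_nat_mono[OF card_overlapping_pairs[of b N p], where 'a=real] by simp
  qed
  also have "\<dots> = 4 * real (max_lag b N)^2 * real N"
    by (simp add: card_lag_region power2_eq_square)
  finally show ?thesis .
qed

text \<open>Growth of the region between times \<open>p \<le> N\<close>: the part with lags up to \<open>max_lag b p\<close> grows
  by the derivative of \<open>N^(b+1)\<close>, the new lags contribute at most \<open>p\<close> through the rounding.\<close>
lemma lag_region_growth:
  assumes b: "0 < b" and p: "1 \<le> p" "p \<le> N"
  shows "real (max_lag b N * N) - real (max_lag b p * p) \<le> (b+1) * real N powr b * (real N - real p) + real p"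
proof -
  have Npos: "0 < real N" using p by auto
  have "real (max_lag b N * N) \<le> real N powr b * real N"
    using mult_right_mono[OF max_lag_le[of b N], of "real N"] by simp
  also have "\<dots> = real N powr (b+1)" using Npos by (simp add: powr_add)
  finally have upper: "real (max_lag b N * N) \<le> real N powr (b+1)" .
  have "real p powr (b+1) - real p = (real p powr b - 1) * real p"
    using p by (simp add: powr_add algebra_simps)
  also have "\<dots> \<le> real (max_lag b p * p)" using max_lag_ge[of p b] by (simp add: mult_right_mono)
  finally have lower: "real p powr (b+1) - real p \<le> real (max_lag b p * p)" .
  have "real N powr (b+1) - real p powr (b+1) \<le> (b+1) * real N powr (b+1-1) * (real N - real p)"
    using p b by (intro powr_diff_le) auto
  then show ?thesis using upper lower by simp
qed

section \<open>From bounds along subsequences to bounds for all times\<close>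

text \<open>The hypotheses shared by the two interpolation lemmas: \<open>s N\<close> is a sum over the lag region
  of terms bounded by \<open>K\<close>, so it changes by at most \<open>K\<close> per new index pair.\<close>
definition lag_increment_bounded :: "real \<Rightarrow> real \<Rightarrow> (nat \<Rightarrow> real) \<Rightarrow> bool" where
  "lag_increment_bounded b K s \<longleftrightarrow> s 0 = 0 \<and>
     (\<forall>N p. p \<le> N \<longrightarrow> \<bar>s N - s p\<bar> \<le> K * (real (max_lag b N * N) - real (max_lag b p * p)))"

text \<open>Large lags (\<open>2a \<le> b\<close>): the bound \<open>N^(b+1-2a)\<close> along the cubes extends to all \<open>N\<close>,
  because between consecutive cubes the region grows by \<open>O(N^(b+1-2a))\<close> pairs.\<close>
lemma interpolate_from_cubes:
  fixes s :: "nat \<Rightarrow> real"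
  assumes a: "0 < a" "a < 1/6" and ab: "2*a \<le> b" and K: "0 \<le> K"
    and s: "lag_increment_bounded b K s"
    and cubes: "\<And>k. \<bar>s (k^3)\<bar> \<le> C * real (k^3) powr (b+1-2*a)"
  shows "\<exists>C'. \<forall>N. \<bar>s N\<bar> \<le> C' * real N powr (b+1-2*a)"
proof -
  define e where "e = b+1-2*a"
  have b: "0 < b" and e1: "1 \<le> e" using a ab unfolding e_def by auto
  have C: "0 \<le> C" using cubes[of 1] by simp
  have "\<bar>s N\<bar> \<le> (C + K * (6*(b+1)+1)) * real N powr e" for N
  proof (cases "N = 0")
    case False
    then have N1: "1 \<le> N" and Npos: "0 < real N" by auto
    obtain k where k: "1 \<le> k" "k^3 \<le> N" "real N - real (k^3) \<le> 6 * real N powr (2/3)"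
      using cube_gap[OF N1] by auto
    define p where "p = k^3"
    have p: "1 \<le> p" "p \<le> N" using k unfolding p_def by auto
    have incr: "\<bar>s N - s p\<bar> \<le> K * (real (max_lag b N * N) - real (max_lag b p * p))"
      using s p(2) unfolding lag_increment_bounded_def by blast
    have "real N powr b * (real N - real p) \<le> real N powr b * (6 * real N powr (2/3))"
      using k(3) unfolding p_def by (intro mult_left_mono) auto
    also have "\<dots> \<le> real N powr b * (6 * real N powr (1-2*a))"
      using N1 a by (intro mult_left_mono powr_mono) auto
    also have "\<dots> = 6 * real N powr e"
      unfolding e_def using Npos by (simp add: powr_add[symmetric] add_diff_eq)
    finally have gap: "real N powr b * (real N - real p) \<le> 6 * real N powr e" .
    have "real p \<le> real N powr 1" using p by simp
    also have "\<dots> \<le> real N powr e" using N1 e1 by (intro powr_mono) auto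
    finally have pe: "real p \<le> real N powr e" .
    have "real (max_lag b N * N) - real (max_lag b p * p)
        \<le> (b+1) * (real N powr b * (real N - real p)) + real p"
      using lag_region_growth[OF b p] by (simp add: mult.assoc)
    also have "\<dots> \<le> (b+1) * (6 * real N powr e) + real N powr e"
      using gap pe b by (intro add_mono mult_left_mono) auto
    also have "\<dots> = (6*(b+1)+1) * real N powr e" by (simp add: algebra_simps)
    finally have "\<bar>s N - s p\<bar> \<le> K * ((6*(b+1)+1) * real N powr e)"
      using incr K by (meson mult_left_mono order_trans)
    moreover have "\<bar>s p\<bar> \<le> C * real N powr e"
    proof -
      have "\<bar>s p\<bar> \<le> C * real p powr e" using cubes[of k] unfolding p_def e_def .
      also have "\<dots> \<le> C * real N powr e" using C p e1 by (intro mult_left_mono powr_mono2) auto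
      finally show ?thesis .
    qed
    ultimately show ?thesis by (simp add: algebra_simps)
  qed (use s in \<open>simp add: lag_increment_bounded_def\<close>)
  then show ?thesis unfolding e_def by blast
qed

text \<open>General lags: if moreover the bound holds at the times \<open>lag_start b j\<close> where the maximal lag
  increases, it extends to all \<open>N\<close>; between \<open>max (k^3) (lag_start b (max_lag b N))\<close> and \<open>N\<close>
  only new starts \<open>n\<close>, no new lags, enter the region.\<close>
lemma interpolate_from_cubes_and_lag_starts:
  fixes s :: "nat \<Rightarrow> real"
  assumes a: "0 < a" "a < 1/6" and b: "0 < b" and K: "0 \<le> K"
    and s: "lag_increment_bounded b K s"
    and cubes: "\<And>k. \<bar>s (k^3)\<bar> \<le> C * real (k^3) powr (b+1-2*a)"
    and starts: "\<And>j. \<bar>s (lag_start b j)\<bar> \<le> C * real (lag_start b j) powr (b+1-2*a)"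
  shows "\<exists>C'. \<forall>N. \<bar>s N\<bar> \<le> C' * real N powr (b+1-2*a)"
proof -
  define e where "e = b+1-2*a"
  have e0: "0 < e" using a b unfolding e_def by auto
  have C: "0 \<le> C" using cubes[of 1] by simp
  have "\<bar>s N\<bar> \<le> (C + 6 * K) * real N powr e" for N
  proof (cases "N = 0")
    case False
    then have N1: "1 \<le> N" and Npos: "0 < real N" by auto
    obtain k where k: "1 \<le> k" "k^3 \<le> N" "real N - real (k^3) \<le> 6 * real N powr (2/3)"
      using cube_gap[OF N1] by auto
    define q where "q = lag_start b (max_lag b N)"
    define p where "p = max (k^3) q"
    have p: "1 \<le> p" "p \<le> N"
      using k(1,2) lag_start_max_lag_le[OF b, of N] unfolding p_def q_def
      by (auto simp: le_max_iff_disj Suc_le_eq)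
    have same_lag: "max_lag b p = max_lag b N"
    proof (rule antisym)
      show "max_lag b p \<le> max_lag b N" using max_lag_mono[OF b p(2)] .
      have "max_lag b N \<le> max_lag b q" unfolding q_def by (rule le_max_lag_start[OF b])
      also have "\<dots> \<le> max_lag b p" unfolding p_def by (intro max_lag_mono[OF b]) simp
      finally show "max_lag b N \<le> max_lag b p" .
    qed
    have "real N - real p \<le> 6 * real N powr (1-2*a)"
    proof -
      have "real N powr (2/3) \<le> real N powr (1-2*a)" using N1 a by (intro powr_mono) auto
      moreover have "real (k^3) \<le> real p" unfolding p_def by (simp del: of_nat_power)
      ultimately show ?thesis using k(3) by linarith
    qed
    then have "real (max_lag b N) * (real N - real p) \<le> real N powr b * (6 * real N powr (1-2*a))"
      using max_lag_le[of b N] p by (intro mult_mono) auto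
    also have "\<dots> = 6 * real N powr e"
      unfolding e_def using Npos by (simp add: powr_add[symmetric] add_diff_eq)
    finally have gap: "real (max_lag b N) * (real N - real p) \<le> 6 * real N powr e" .
    have "\<bar>s N - s p\<bar> \<le> K * (real (max_lag b N * N) - real (max_lag b p * p))"
      using s p(2) unfolding lag_increment_bounded_def by blast
    also have "\<dots> = K * (real (max_lag b N) * (real N - real p))"
      using same_lag by (simp add: algebra_simps)
    also have "\<dots> \<le> K * (6 * real N powr e)" using gap K by (rule mult_left_mono)
    finally have "\<bar>s N - s p\<bar> \<le> K * (6 * real N powr e)" .
    moreover have "\<bar>s p\<bar> \<le> C * real p powr e"
      using cubes[of k] starts[of "max_lag b N"] unfolding p_def e_def q_def[symmetric]
      by (cases "k^3 \<le> q") (simp_all add: max_def)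
    moreover have "C * real p powr e \<le> C * real N powr e"
      using C p e0 by (intro mult_left_mono powr_mono2) auto
    ultimately show ?thesis by (simp add: algebra_simps)
  qed (use s in \<open>simp add: lag_increment_bounded_def\<close>)
  then show ?thesis unfolding e_def by blast
qed

section \<open>Lagged sums of a bounded independent sequence\<close>

definition lag_sum :: "(nat \<Rightarrow> 'a \<Rightarrow> real) \<Rightarrow> real \<Rightarrow> nat \<Rightarrow> 'a \<Rightarrow> real" where
  "lag_sum Y b N \<omega> = (\<Sum>p\<in>lag_region b N. \<Prod>k\<in>lag_pair p. Y k \<omega>)"

lemma lag_sum_eq:
  "lag_sum Y b N \<omega> = (\<Sum>m=1..nat \<lfloor>real N powr b\<rfloor>. \<Sum>n=1..N. Y (n+m) \<omega> * Y n \<omega>)"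
proof -
  have "lag_sum Y b N \<omega> = (\<Sum>p\<in>lag_region b N. Y (snd p + fst p) \<omega> * Y (snd p) \<omega>)"
    unfolding lag_sum_def
    by (intro sum.cong refl) (auto simp: lag_region_def prod_lag_pair)
  then show ?thesis
    unfolding lag_region_def max_lag_def sum.cartesian_product by (simp add: case_prod_beta)
qed

lemma finite_lag_pair: "finite (lag_pair p)"
  by (simp add: lag_pair_def)

lemma abs_prod_lag_pair_le:
  fixes y :: "nat \<Rightarrow> real"
  assumes "\<And>k. \<bar>y k\<bar> \<le> K" "1 \<le> K"
  shows "\<bar>\<Prod>k\<in>lag_pair p. y k\<bar> \<le> K^2"
proof -
  have "card (lag_pair p) \<le> 2" unfolding lag_pair_def by (simp add: card_insert_le_m1)
  then have "K ^ card (lag_pair p) \<le> K^2" using assms(2) by (rule power_increasing)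
  with abs_prod_le_power[OF assms(1)] show ?thesis by (rule order_trans)
qed

lemma lag_sum_increment_bounded:
  assumes "0 < b" "\<And>k. \<bar>Y k \<omega>\<bar> \<le> K" "1 \<le> K"
  shows "lag_increment_bounded b (K^2) (\<lambda>N. lag_sum Y b N \<omega>)"
  unfolding lag_increment_bounded_def lag_sum_def
  using sum_lag_region_increment[OF assms(1) _ abs_prod_lag_pair_le[OF assms(2,3)]]
  by (simp add: lag_region_def)

locale bounded_indep_seq = prob_space +
  fixes Y :: "nat \<Rightarrow> 'a \<Rightarrow> real" and K :: real
  assumes indep: "indep_vars (\<lambda>_. borel) Y UNIV"
    and bounded: "\<And>k \<omega>. \<bar>Y k \<omega>\<bar> \<le> K" and K1: "1 \<le> K"
begin

lemma measurable_Y[measurable]: "Y k \<in> borel_measurable M"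
  using indep unfolding indep_vars_def by auto

lemma integrable_Y: "integrable M (Y k)"
  by (rule integrable_const_bound[where B=K]) (use bounded in auto)

lemma measurable_lag_sum[measurable]: "lag_sum Y b N \<in> borel_measurable M"
  unfolding lag_sum_def by measurable

lemma abs_lag_sum_le: "\<bar>lag_sum Y b N \<omega>\<bar> \<le> real (card (lag_region b N)) * K^2"
  unfolding lag_sum_def
  by (rule order_trans[OF sum_abs]) (use sum_mono[OF abs_prod_lag_pair_le[OF bounded K1]] in auto)

lemma abs_expectation_lag_sum_le:
  assumes mean: "\<And>n. 1 \<le> n \<Longrightarrow> \<bar>expectation (Y n)\<bar> \<le> D * real n powr (-a)"
    and a: "0 < a" "a < 1/2"
  shows "\<bar>expectation (lag_sum Y b N)\<bar> \<le> D^2 / (1 - 2*a) * real N powr (b+1-2*a)"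
proof -
  have D: "0 \<le> D" using mean[of 1] by simp
  have EN: "expectation (lag_sum Y b N) = (\<Sum>p\<in>lag_region b N. \<Prod>k\<in>lag_pair p. expectation (Y k))"
    unfolding lag_sum_def
    by (subst Bochner_Integration.integral_sum)
       (auto intro!: sum.cong expectation_prod_indep[OF indep] integrable_Y
             integrable_const_bound[where B="K^2"] abs_prod_lag_pair_le[OF bounded K1] finite_lag_pair)
  have term_le: "\<bar>\<Prod>k\<in>lag_pair p. expectation (Y k)\<bar> \<le> D^2 * real (snd p) powr (-2*a)"
    if p_in: "p \<in> lag_region b N" for p
  proof -
    obtain m n where p: "p = (m, n)" and m: "1 \<le> m" and n: "1 \<le> n"
      using p_in unfolding lag_region_def by (cases p) auto
    have "\<bar>\<Prod>k\<in>lag_pair p. expectation (Y k)\<bar> = \<bar>expectation (Y (n+m))\<bar> * \<bar>expectation (Y n)\<bar>"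
      unfolding p prod_lag_pair[OF m] by (simp add: abs_mult)
    also have "\<dots> \<le> (D * real (n+m) powr (-a)) * (D * real n powr (-a))"
      using mean[of "n+m"] mean[of n] n by (intro mult_mono) auto
    also have "\<dots> \<le> (D * real n powr (-a)) * (D * real n powr (-a))"
      using D n a by (intro mult_right_mono mult_left_mono powr_mono2') auto
    also have "\<dots> = D^2 * real (snd p) powr (-2*a)"
      using p by (simp add: power2_eq_square powr_add[symmetric] algebra_simps)
    finally show ?thesis .
  qed
  have "\<bar>expectation (lag_sum Y b N)\<bar> \<le> (\<Sum>p\<in>lag_region b N. D^2 * real (snd p) powr (-2*a))"
    unfolding EN by (rule order_trans[OF sum_abs]) (intro sum_mono term_le)
  also have "\<dots> = (\<Sum>m=1..max_lag b N. \<Sum>n=1..N. D^2 * real n powr (-2*a))"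
    unfolding lag_region_def sum.cartesian_product by (simp add: case_prod_beta)
  also have "\<dots> = real (max_lag b N) * (D^2 * (\<Sum>n=1..N. real n powr (-(2*a))))"
    by (simp add: sum_distrib_left)
  also have "\<dots> \<le> real N powr b * (D^2 * (real N powr (1 - 2*a) / (1 - 2*a)))"
    using a D by (intro mult_mono max_lag_le mult_left_mono sum_powr_le)
      (auto intro!: sum_nonneg mult_nonneg_nonneg)
  also have "\<dots> = D^2 / (1 - 2*a) * real N powr (b+1-2*a)"
    by (cases "N = 0") (auto simp: powr_add[symmetric] algebra_simps)
  finally show ?thesis .
qed

text \<open>The variance of the lagged sum is \<open>O(N^(2b+1))\<close>: only pairs sharing an index correlate.\<close>
lemma variance_lag_sum_le: "variance (lag_sum Y b N) \<le> 16 * K^4 * real (max_lag b N)^2 * real N"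
proof -
  have "variance (lag_sum Y b N) \<le> 4 * (K^2)^2 *
      (\<Sum>p\<in>lag_region b N. real (card {q\<in>lag_region b N. lag_pair p \<inter> lag_pair q \<noteq> {}}))"
    unfolding lag_sum_def
    by (rule variance_sum_indep_prod_le[OF indep bounded _ abs_prod_lag_pair_le[OF bounded K1]])
       (auto simp: finite_lag_pair lag_region_def)
  also have "\<dots> \<le> 4 * (K^2)^2 * (4 * real (max_lag b N)^2 * real N)"
    by (intro mult_left_mono sum_card_overlapping_pairs) auto
  finally show ?thesis by (simp add: power_mult[symmetric])
qed

lemma lag_sum_deviation_prob:
  assumes N: "1 \<le> N"
  shows "prob {\<omega>\<in>space M. real N powr (b+1-2*a) \<le> \<bar>lag_sum Y b N \<omega> - expectation (lag_sum Y b N)\<bar>}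
    \<le> 16 * K^4 * real N powr (4*a-1)"
proof -
  define e where "e = b+1-2*a"
  have Npos: "0 < real N" using N by auto
  have "norm ((lag_sum Y b N \<omega>)^2) \<le> (real (card (lag_region b N)) * K^2)^2" for \<omega>
    using power_mono[OF abs_lag_sum_le abs_ge_zero, of b N \<omega> 2] by simp
  then have "integrable M (\<lambda>\<omega>. (lag_sum Y b N \<omega>)^2)"
    by (intro integrable_const_bound[where B="(real (card (lag_region b N)) * K^2)^2"]) auto
  then have "prob {\<omega>\<in>space M. real N powr e \<le> \<bar>lag_sum Y b N \<omega> - expectation (lag_sum Y b N)\<bar>}
      \<le> variance (lag_sum Y b N) / (real N powr e)^2"
    using Npos by (intro Chebyshev_inequality) auto
  also have "\<dots> \<le> 16 * K^4 * (real N powr b)^2 * real N / (real N powr e)^2"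
  proof (rule divide_right_mono)
    have "16 * K^4 * real (max_lag b N)^2 * real N \<le> 16 * K^4 * (real N powr b)^2 * real N"
      by (intro mult_right_mono mult_left_mono power_mono max_lag_le) auto
    with variance_lag_sum_le show "variance (lag_sum Y b N) \<le> 16 * K^4 * (real N powr b)^2 * real N"
      by (rule order_trans)
  qed simp
  also have "\<dots> = 16 * K^4 * real N powr (4*a-1)"
  proof -
    have "(real N powr b)^2 * real N = real N powr b * real N powr b * real N powr 1"
      using Npos by (simp add: power2_eq_square)
    also have "\<dots> = real N powr (b + b + 1)" by (simp only: powr_add)
    also have "b + b + 1 = 2*e + (4*a-1)" unfolding e_def by simp
    also have "real N powr (2*e + (4*a-1)) = real N powr (2*e) * real N powr (4*a-1)"
      by (rule powr_add)
    finally have num: "(real N powr b)^2 * real N = real N powr (2*e) * real N powr (4*a-1)" .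
    have den: "(real N powr e)^2 = real N powr (2*e)"
      by (simp add: power2_eq_square powr_add[symmetric])
    show ?thesis using Npos by (simp add: mult.assoc num den)
  qed
  finally show ?thesis unfolding e_def .
qed

text \<open>Along a subsequence growing like \<open>k^r\<close> with \<open>r (1-4a) > 1\<close>, Chebyshev and Borel--Cantelli
  give the almost sure bound \<open>O(N^(b+1-2a))\<close>.\<close>
lemma lag_sum_bound_along:
  fixes h :: "nat \<Rightarrow> nat"
  assumes mean: "\<And>n. 1 \<le> n \<Longrightarrow> \<bar>expectation (Y n)\<bar> \<le> D * real n powr (-a)"
    and a: "0 < a" "a < 1/4"
    and h: "\<And>k. 1 \<le> k \<Longrightarrow> real k powr r \<le> real (h k)" and r: "r * (4*a - 1) < -1"
  shows "AE \<omega> in M. \<exists>C. \<forall>k. \<bar>lag_sum Y b (h k) \<omega>\<bar> \<le> C * real (h k) powr (b+1-2*a)"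
proof -
  define e where "e = b+1-2*a"
  define C where "C = D^2 / (1 - 2*a)"
  define A where "A k = {\<omega>\<in>space M. real (h k) powr e \<le> \<bar>lag_sum Y b (h k) \<omega> - expectation (lag_sum Y b (h k))\<bar>}"
    for k
  have "AE \<omega> in M. eventually (\<lambda>k. \<omega> \<notin> A k) sequentially"
  proof (rule borel_cantelli_powr)
    show "A k \<in> events" for k unfolding A_def by measurable
    show "eventually (\<lambda>k. prob (A k) \<le> 16 * K^4 * real k powr (r * (4*a-1))) sequentially"
      unfolding eventually_sequentially
    proof (intro exI[of _ 1] allI impI)
      fix k :: nat assume k: "1 \<le> k"
      have kr: "0 < real k powr r" using k by simp
      then have hk: "1 \<le> h k" using h[OF k] by linarith
      have "prob (A k) \<le> 16 * K^4 * real (h k) powr (4*a-1)"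
        unfolding A_def e_def by (rule lag_sum_deviation_prob[OF hk])
      also have "\<dots> \<le> 16 * K^4 * (real k powr r) powr (4*a-1)"
        using h[OF k] kr a by (intro mult_left_mono powr_mono2') auto
      finally show "prob (A k) \<le> 16 * K^4 * real k powr (r * (4*a-1))" by (simp add: powr_powr)
    qed
  qed (use r in simp)
  then show ?thesis
  proof (rule AE_mp, intro AE_I2 impI)
    fix \<omega> assume \<omega>: "\<omega> \<in> space M" and ev: "eventually (\<lambda>k. \<omega> \<notin> A k) sequentially"
    have "eventually (\<lambda>k. \<bar>lag_sum Y b (h k) \<omega>\<bar> \<le> (C + 1) * real (h k) powr e) sequentially"
      using ev
    proof eventually_elim
      case (elim k)
      then have "\<bar>lag_sum Y b (h k) \<omega> - expectation (lag_sum Y b (h k))\<bar> < real (h k) powr e"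
        using \<omega> unfolding A_def by auto
      then show ?case
        using abs_expectation_lag_sum_le[OF mean a(1), of b "h k"] a unfolding C_def e_def
        by (simp add: algebra_simps)
    qed
    then show "\<exists>C. \<forall>k. \<bar>lag_sum Y b (h k) \<omega>\<bar> \<le> C * real (h k) powr (b+1-2*a)"
      unfolding e_def by (rule eventually_bound_imp_bound) (simp add: lag_sum_def lag_region_def)
  qed
qed

text \<open>The almost sure bound for all \<open>N\<close>: along the cubes (and, for small lags \<open>b < 2a\<close>, along
  the times \<open>lag_start b j\<close>) it follows from Borel--Cantelli; in between it follows by interpolation.
  Both subsequences are sparse enough exactly because \<open>a < 1/6\<close>.\<close>
lemma lag_sum_AE_bound:
  assumes mean: "\<And>n. 1 \<le> n \<Longrightarrow> \<bar>expectation (Y n)\<bar> \<le> D * real n powr (-a)"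
    and a: "0 < a" "a < 1/6" and b: "0 < b"
  shows "AE \<omega> in M. \<exists>C. \<forall>N. \<bar>lag_sum Y b N \<omega>\<bar> \<le> C * real N powr (b+1-2*a)"
proof -
  have cubes: "AE \<omega> in M. \<exists>C. \<forall>k. \<bar>lag_sum Y b (k^3) \<omega>\<bar> \<le> C * real (k^3) powr (b+1-2*a)"
    by (rule lag_sum_bound_along[OF mean, where r=3]) (use a b in auto)
  have starts: "AE \<omega> in M. b < 2*a \<longrightarrow>
      (\<exists>C. \<forall>j. \<bar>lag_sum Y b (lag_start b j) \<omega>\<bar> \<le> C * real (lag_start b j) powr (b+1-2*a))"
  proof (cases "b < 2*a")
    case True
    then have "1/b * (4*a - 1) < -1" using a b by (simp add: divide_less_eq)
    then show ?thesis
      using lag_sum_bound_along[OF mean _ _ lag_start_ge, of b] a b by (auto elim!: AE_mp)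
  qed simp
  show ?thesis
    using cubes starts
  proof eventually_elim
    case (elim \<omega>)
    obtain C1 where C1: "\<And>k. \<bar>lag_sum Y b (k^3) \<omega>\<bar> \<le> C1 * real (k^3) powr (b+1-2*a)"
      using elim(1) by blast
    have incr: "lag_increment_bounded b (K^2) (\<lambda>N. lag_sum Y b N \<omega>)"
      by (rule lag_sum_increment_bounded[where Y=Y, OF b bounded K1])
    show ?case
    proof (cases "b < 2*a")
      case True
      then obtain C2 where C2: "\<And>j. \<bar>lag_sum Y b (lag_start b j) \<omega>\<bar> \<le> C2 * real (lag_start b j) powr (b+1-2*a)"
        using elim(2) by blast
      have "\<bar>lag_sum Y b (k^3) \<omega>\<bar> \<le> max C1 C2 * real (k^3) powr (b+1-2*a)" for k
        using C1[of k] by (smt (verit) max.cobounded1 mult_right_mono powr_ge_zero)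
      moreover have "\<bar>lag_sum Y b (lag_start b j) \<omega>\<bar> \<le> max C1 C2 * real (lag_start b j) powr (b+1-2*a)" for j
        using C2[of j] by (smt (verit) max.cobounded2 mult_right_mono powr_ge_zero)
      ultimately show ?thesis
        using K1 by (intro interpolate_from_cubes_and_lag_starts[OF a b _ incr]) auto
    next
      case False
      then show ?thesis using K1 by (intro interpolate_from_cubes[OF a _ _ incr C1]) auto
    qed
  qed
qed

end

context prob_space
begin

lemma truncate_bounded_indep:
  fixes X :: "nat \<Rightarrow> 'a \<Rightarrow> real"
  assumes indep: "indep_vars (\<lambda>_. borel) X UNIV" and bdd: "\<exists>K. \<forall>n. AE \<omega> in M. \<bar>X n \<omega>\<bar> \<le> K"
  obtains Y K where "bounded_indep_seq M Y K" and "AE \<omega> in M. \<forall>n. X n \<omega> = Y n \<omega>"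
    and "\<And>n. expectation (Y n) = expectation (X n)"
proof -
  obtain K0 where K0: "\<And>n. AE \<omega> in M. \<bar>X n \<omega>\<bar> \<le> K0" using bdd by auto
  define K where "K = max K0 1"
  define Y where "Y n \<omega> = max (-K) (min K (X n \<omega>))" for n \<omega>
  have [measurable]: "X n \<in> borel_measurable M" for n
    using indep unfolding indep_vars_def by auto
  have [measurable]: "Y n \<in> borel_measurable M" for n
    unfolding Y_def by measurable
  have "bounded_indep_seq M Y K"
  proof
    show "indep_vars (\<lambda>_. borel) Y UNIV"
      unfolding Y_def by (rule indep_vars_compose2[OF indep]) measurable
  qed (auto simp: Y_def K_def)
  moreover have XY: "AE \<omega> in M. \<forall>n. X n \<omega> = Y n \<omega>"
    unfolding AE_all_countable
  proof
    fix n show "AE \<omega> in M. X n \<omega> = Y n \<omega>"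
      using K0[of n] by eventually_elim (auto simp: Y_def K_def)
  qed
  moreover have "expectation (Y n) = expectation (X n)" for n
    by (rule integral_cong_AE) (use XY in \<open>auto simp: Y_def\<close>)
  ultimately show ?thesis by (rule that)
qed

end

theorem lemma5p7:
  fixes M :: "'s measure" and X :: "nat \<Rightarrow> 's \<Rightarrow> real" and a b :: real
  assumes "prob_space M"
    and meas: "\<And>n. X n \<in> borel_measurable M"
    and indep: "prob_space.indep_vars M (\<lambda>_. borel) X UNIV"
    and bdd: "\<exists>K. \<forall>n. AE \<omega> in M. \<bar>X n \<omega>\<bar> \<le> K"
    and mean: "\<exists>c. c \<noteq> 0 \<and>
      (\<lambda>n. prob_space.expectation M (X n) / (real n powr (-a))) \<longlonglongrightarrow> c"
    and a: "0 < a" "a < 1/6"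
    and b: "0 < b"
  shows "AE \<omega> in M. \<exists>C. \<forall>N::nat.
    \<bar>\<Sum>m=1..nat \<lfloor>real N powr b\<rfloor>. \<Sum>n=1..N. X (n+m) \<omega> * X n \<omega>\<bar>
      \<le> C * real N powr (b + 1 - 2*a)"
proof -
  interpret prob_space M by fact
  obtain Y K where Y: "bounded_indep_seq M Y K" and XY: "AE \<omega> in M. \<forall>n. X n \<omega> = Y n \<omega>"
    and EY: "\<And>n. expectation (Y n) = expectation (X n)"
    using truncate_bounded_indep[OF indep bdd] by blast
  interpret Y: bounded_indep_seq M Y K by (rule Y)
  obtain c where "(\<lambda>n. expectation (Y n) / real n powr (-a)) \<longlonglongrightarrow> c"
    using mean unfolding EY by blast
  then obtain D where D: "\<And>n. 1 \<le> n \<Longrightarrow> \<bar>expectation (Y n)\<bar> \<le> D * real n powr (-a)"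
    by (rule bounded_by_powr_of_limit) blast
  have "AE \<omega> in M. \<exists>C. \<forall>N. \<bar>lag_sum Y b N \<omega>\<bar> \<le> C * real N powr (b+1-2*a)"
    by (rule Y.lag_sum_AE_bound[OF D a b])
  then show ?thesis
    using XY by eventually_elim (simp add: lag_sum_eq)
qed

end
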